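(* Let $\mathcal{X}=\mathcal{X}_1\times\cdots\times\mathcal{X}_d$, $\sigma>0$, and $\mathcal{Q}:\mathcal{X}\to\mathbb{R}^m$. Define $\Delta=\sup\{\|\mathcal{Q}(u)-\mathcal{Q}(v)\|_2: u,v\in\mathcal{X}\}$ and $\Delta_0=\sup\{\|\mathcal{Q}(u)-\mathcal{Q}(v)\|_2:u,v\in\mathcal{X},\|u-v\|_0\le1\}$. Define $M:\mathcal{X}^n\to\mathbb{R}^m$ as follows: on input $x\in\mathcal{X}^n$, compute $\mathcal{Q}(x)=\frac1n\sum_{i=1}^n\mathcal{Q}(x_i)$, sample $Y\sim\mathcal{N}(\mathcal{Q}(x),\sigma^2I)$, and output $\hat Y=\arg\min_{y\in \mathrm{conv}(\{\mathcal{Q}(u):u\in\mathcal{X}\})}\|y-Y\|_2$. Then $M$ simultaneously satisfies $\frac12\varepsilon^2$-zCDP and $\varepsilon_0$-$\nabla_0$CDP with $\varepsilon=\frac{\Delta}{\sigma n}$ and $\varepsilon_0=\frac{\Delta_0}{\sigma n}$. Furthermore, for all $x\in\mathcal{X}^n$, $$\mathbb{E}\left[\frac1m\|M(x)-\mathcal{Q}(x)\|_2^2\right]\le\min\left\{\sigma^2,\ \frac{\sigma\cdot\Delta\cdot\sqrt{2\log|\mathcal{X}|}}{m}\right\}$$ (where the second term is read as $+\infty$ if $\mathcal{X}$ is infinite).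
   Context: $\mathrm{conv}$ denotes convex hull; $\|u-v\|_0=|\{j\in[d]:u_j\ne v_j\}|$. Rényi divergence $D_\lambda(P\|Q)=\frac{1}{\lambda-1}\log\mathbb{E}_{X\sim P}[(P(X)/Q(X))^{\lambda-1}]$ and $D_*(P\|Q)=\sup_{\lambda>1}\frac1\lambda D_\lambda(P\|Q)$. $M$ is $\frac12\varepsilon^2$-zCDP if $D_*(M(x)\|M(x'))\le\frac12\varepsilon^2$ for all $x,x'\in\mathcal{X}^n$ differing in a single entry. $M$ is $\varepsilon_0$-$\nabla_0$CDP if for all $x,x'\in\mathcal{X}^n$ differing only in entry $i$, $D_*(M(x)\|M(x'))\le\frac12\varepsilon_0^2\|x_i-x'_i\|_0^2$. *)

theory Defs
  imports "HOL-Probability.Probability"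
begin

text \<open>Hamming distance on points of a d-fold product (points are functions on {..<d}).\<close>
definition hamming :: "nat \<Rightarrow> (nat \<Rightarrow> 'a) \<Rightarrow> (nat \<Rightarrow> 'a) \<Rightarrow> nat" where
  "hamming d u v = card {j \<in> {..<d}. u j \<noteq> v j}"

text \<open>Renyi divergence D_lambda(P||Q) (value in ereal; infinite if P is not
  absolutely continuous w.r.t. Q or the moment is infinite). P(X)/Q(X) is the
  Radon-Nikodym derivative dP/dQ = RN_deriv Q P.\<close>
definition renyi_div :: "real \<Rightarrow> 'a measure \<Rightarrow> 'a measure \<Rightarrow> ereal" where
  "renyi_div lam P Q =
     (if absolutely_continuous Q P \<and> sets P = sets Q then
        (let E = (\<integral>\<^sup>+ x. ennreal ((enn2real (RN_deriv Q P x)) powr (lam - 1)) \<partial>P) in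
         if E = \<infinity> then \<infinity> else ereal (ln (enn2real E) / (lam - 1)))
      else \<infinity>)"

definition renyi_star :: "'a measure \<Rightarrow> 'a measure \<Rightarrow> ereal" where
  "renyi_star P Q = (SUP lam \<in> {1<..}. renyi_div lam P Q / ereal lam)"

text \<open>Neighbouring datasets in X^n (datasets are functions on {..<n}).\<close>
definition neighbours :: "nat \<Rightarrow> nat \<Rightarrow> (nat \<Rightarrow> 'b) \<Rightarrow> (nat \<Rightarrow> 'b) \<Rightarrow> bool" where
  "neighbours n i x x' \<longleftrightarrow> i < n \<and> (\<forall>j<n. j \<noteq> i \<longrightarrow> x j = x' j)"

definition zCDP :: "'b set \<Rightarrow> nat \<Rightarrow> ((nat \<Rightarrow> 'b) \<Rightarrow> 'c measure) \<Rightarrow> ereal \<Rightarrow> bool" where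
  "zCDP X n M eps \<longleftrightarrow>
     (\<forall>x \<in> PiE {..<n} (\<lambda>_. X). \<forall>x' \<in> PiE {..<n} (\<lambda>_. X). \<forall>i.
        neighbours n i x x' \<longrightarrow> renyi_star (M x) (M x') \<le> ereal (1/2) * eps ^ 2)"

definition nabla0CDP :: "nat \<Rightarrow> (nat \<Rightarrow> 'a) set \<Rightarrow> nat \<Rightarrow> ((nat \<Rightarrow> (nat \<Rightarrow> 'a)) \<Rightarrow> 'c measure)
     \<Rightarrow> ereal \<Rightarrow> bool" where
  "nabla0CDP d X n M eps0 \<longleftrightarrow>
     (\<forall>x \<in> PiE {..<n} (\<lambda>_. X). \<forall>x' \<in> PiE {..<n} (\<lambda>_. X). \<forall>i.
        neighbours n i x x' \<longrightarrow>
          renyi_star (M x) (M x') \<le> ereal (1/2) * eps0 ^ 2 * ereal (real (hamming d (x i) (x' i)) ^ 2))"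

definition gauss_measure :: "real^'m \<Rightarrow> real \<Rightarrow> (real^'m) measure" where
  "gauss_measure mu \<sigma> = density lborel (\<lambda>y. ennreal (\<Prod>i\<in>UNIV. normal_density (mu $ i) \<sigma> (y $ i)))"

definition avgQ :: "('b \<Rightarrow> real^'m) \<Rightarrow> nat \<Rightarrow> (nat \<Rightarrow> 'b) \<Rightarrow> real^'m" where
  "avgQ Q n x = (1 / real n) *\<^sub>R (\<Sum>i<n. Q (x i))"

definition proj_gauss_mech :: "'b set \<Rightarrow> ('b \<Rightarrow> real^'m) \<Rightarrow> real \<Rightarrow> nat \<Rightarrow> (nat \<Rightarrow> 'b) \<Rightarrow> (real^'m) measure" where
  "proj_gauss_mech X Q \<sigma> n x =
     distr (gauss_measure (avgQ Q n x) \<sigma>) borel (closest_point (closure (convex hull (Q ` X))))"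

definition sens :: "'b set \<Rightarrow> ('b \<Rightarrow> real^'m) \<Rightarrow> ereal" where
  "sens X Q = Sup {ereal (norm (Q u - Q v)) | u v. u \<in> X \<and> v \<in> X}"

definition sens0 :: "nat \<Rightarrow> (nat \<Rightarrow> 'a) set \<Rightarrow> ((nat \<Rightarrow> 'a) \<Rightarrow> real^'m) \<Rightarrow> ereal" where
  "sens0 d X Q = Sup {ereal (norm (Q u - Q v)) | u v. u \<in> X \<and> v \<in> X \<and> hamming d u v \<le> 1}"

end

theory Submission
  imports Defs
begin

text \<open>Post-processing cannot increase Renyi divergences: for the \<open>l\<close>-th moment of the density this is
  Jensen's inequality for conditional expectations. So the divergences of the mechanism are bounded by
  those of the Gaussians \<open>N(a, \<sigma>\<^sup>2 I)\<close> and \<open>N(b, \<sigma>\<^sup>2 I)\<close>, which equal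
  \<open>l \<parallel>a - b\<parallel>\<^sup>2 / (2 \<sigma>\<^sup>2)\<close>. On neighbouring datasets \<open>a - b = (Q(x\<^sub>i) - Q(x'\<^sub>i)) / n\<close>,
  whose norm is at most \<open>\<Delta>\<close>, and at most \<open>\<Delta>\<^sub>0\<close> times the Hamming distance by changing one
  coordinate at a time.

  For accuracy, the projection onto a closed convex set containing the mean \<open>\<mu>\<close> is 1-Lipschitz,
  which gives \<open>\<sigma>\<^sup>2\<close>. Moreover, the obtuse-angle property of the projection bounds
  \<open>\<parallel>\<hat>Y - \<mu>\<parallel>\<^sup>2\<close> by the maximum over \<open>a \<in> Q(X)\<close> of \<open>\<langle>a - \<mu>, Y - \<mu>\<rangle>\<close>: a maximum of
  \<open>|X|\<close> sub-Gaussian variables with variance proxy \<open>\<sigma>\<^sup>2 \<Delta>\<^sup>2\<close>, whose mean is at most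
  \<open>\<sigma> \<Delta> \<surd>(2 log |X|)\<close>.\<close>

section \<open>Gaussian measures on \<open>real^'m\<close>\<close>

lemma nn_integral_cmult_normal_density:
  assumes "\<sigma> > 0" "0 \<le> K"
  shows "(\<integral>\<^sup>+x. ennreal (K * normal_density a \<sigma> x) \<partial>lborel) = ennreal K"
proof -
  have "(\<integral>\<^sup>+x. ennreal (normal_density a \<sigma> x) \<partial>lborel) = 1"
    using assms by (subst nn_integral_eq_integral) auto
  then show ?thesis
    using assms by (simp add: ennreal_mult nn_integral_cmult)
qed

lemma exp_mult_normal_density:
  assumes "\<sigma> > 0"
  shows "exp (s * (x - a)) * normal_density a \<sigma> x
    = exp (s\<^sup>2 * \<sigma>\<^sup>2 / 2) * normal_density (a + s * \<sigma>\<^sup>2) \<sigma> x"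
proof -
  have "s * (x - a) - (x - a)\<^sup>2 / (2 * \<sigma>\<^sup>2) = s\<^sup>2 * \<sigma>\<^sup>2 / 2 - (x - (a + s * \<sigma>\<^sup>2))\<^sup>2 / (2 * \<sigma>\<^sup>2)"
    using assms by (simp add: field_simps power2_eq_square)
  then show ?thesis
    unfolding normal_density_def by (simp add: exp_add[symmetric] exp_diff)
qed

lemma normal_density_powr_mult_powr:
  assumes "\<sigma> > 0"
  shows "normal_density a \<sigma> x powr l * normal_density b \<sigma> x powr (1 - l)
    = exp (l * (l - 1) * (a - b)\<^sup>2 / (2 * \<sigma>\<^sup>2)) * normal_density (l * a + (1 - l) * b) \<sigma> x"
proof -
  define C where "C = 1 / sqrt (2 * pi * \<sigma>\<^sup>2)"
  have C: "C > 0" and nd: "normal_density c \<sigma> x = C * exp (-(x - c)\<^sup>2 / (2 * \<sigma>\<^sup>2))" for c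
    using assms by (simp_all add: normal_density_def C_def)
  have exp_powr: "exp t powr r = exp (r * t)" for t r :: real
    by (simp add: powr_def)
  have "normal_density a \<sigma> x powr l * normal_density b \<sigma> x powr (1 - l)
      = (C powr l * C powr (1 - l))
        * exp (l * (-(x - a)\<^sup>2 / (2 * \<sigma>\<^sup>2)) + (1 - l) * (-(x - b)\<^sup>2 / (2 * \<sigma>\<^sup>2)))"
    unfolding nd using C by (simp add: powr_mult exp_powr mult_exp_exp)
  also have "C powr l * C powr (1 - l) = C"
    using C by (simp add: powr_add[symmetric])
  also have "l * (-(x - a)\<^sup>2 / (2 * \<sigma>\<^sup>2)) + (1 - l) * (-(x - b)\<^sup>2 / (2 * \<sigma>\<^sup>2))
      = l * (l - 1) * (a - b)\<^sup>2 / (2 * \<sigma>\<^sup>2) + (-(x - (l * a + (1 - l) * b))\<^sup>2 / (2 * \<sigma>\<^sup>2))"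
    using assms by (simp add: field_simps power2_eq_square)
  finally show ?thesis
    unfolding nd by (simp add: mult_exp_exp ac_simps)
qed

lemma nn_integral_sq_normal_density:
  assumes "\<sigma> > 0"
  shows "(\<integral>\<^sup>+x. ennreal ((x - a)\<^sup>2 * normal_density a \<sigma> x) \<partial>lborel) = ennreal (\<sigma>\<^sup>2)"
  using integrable_normal_moment[OF assms, of a 2] integral_normal_moment_even[OF assms, of a 1]
  by (subst nn_integral_eq_integral) (auto simp: mult.commute)

lemma nn_integral_lborel_vec_prod:
  fixes h :: "'m::finite \<Rightarrow> real \<Rightarrow> real"
  assumes [measurable]: "\<And>i. h i \<in> borel_measurable borel" and nonneg: "\<And>i x. 0 \<le> h i x"
  shows "(\<integral>\<^sup>+y. ennreal (\<Prod>i\<in>UNIV. h i (y $ i)) \<partial>(lborel :: (real^'m) measure))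
    = (\<Prod>i\<in>UNIV. \<integral>\<^sup>+x. ennreal (h i x) \<partial>lborel)"
proof -
  define f where "f b x = ennreal (h (SOME i. b = axis i (1::real)) x)" for b :: "real^'m" and x
  have f_axis: "f (axis i 1) = (\<lambda>x. ennreal (h i x))" for i
    unfolding f_def by (metis (mono_tags, lifting) axis_eq_axis someI zero_neq_one)
  have inj: "inj (\<lambda>i::'m. axis i (1::real))"
    by (auto simp: inj_def axis_eq_axis)
  have Basis: "(Basis :: (real^'m) set) = range (\<lambda>i. axis i 1)"
    by (auto simp: Basis_vec_def)
  have "(\<integral>\<^sup>+y. (\<Prod>b\<in>Basis. f b (y \<bullet> b)) \<partial>(lborel :: (real^'m) measure))
      = (\<Prod>b\<in>(Basis :: (real^'m) set). \<integral>\<^sup>+x. f b x \<partial>lborel)"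
    by (rule nn_integral_lborel_prod) (auto simp: f_def nonneg)
  then show ?thesis
    unfolding Basis using inj nonneg
    by (simp add: prod.reindex f_axis inner_axis prod_ennreal)
qed

lemma power2_norm_vec: "(norm (x :: real^'m::finite))\<^sup>2 = (\<Sum>i\<in>UNIV. (x $ i)\<^sup>2)"
  by (simp add: norm_vec_def L2_set_def sum_nonneg)

definition gauss_density :: "real^'m \<Rightarrow> real \<Rightarrow> real^'m \<Rightarrow> real" where
  "gauss_density mu \<sigma> y = (\<Prod>i\<in>UNIV. normal_density (mu $ i) \<sigma> (y $ i))"

lemma gauss_density_pos: "\<sigma> > 0 \<Longrightarrow> gauss_density mu \<sigma> y > 0"
  unfolding gauss_density_def by (intro prod_pos) (auto intro: normal_density_pos)

lemma borel_measurable_gauss_density [measurable]: "gauss_density mu \<sigma> \<in> borel_measurable borel"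
  unfolding gauss_density_def by measurable

lemma gauss_measure_eq_density: "gauss_measure mu \<sigma> = density lborel (\<lambda>y. ennreal (gauss_density mu \<sigma> y))"
  unfolding gauss_measure_def gauss_density_def ..

lemma sets_gauss_measure [simp, measurable_cong]: "sets (gauss_measure mu \<sigma>) = sets borel"
  by (simp add: gauss_measure_def)

lemma space_gauss_measure [simp]: "space (gauss_measure mu \<sigma>) = UNIV"
  by (simp add: gauss_measure_def)

lemma nn_integral_gauss_measure:
  "f \<in> borel_measurable borel \<Longrightarrow>
    (\<integral>\<^sup>+y. f y \<partial>gauss_measure mu \<sigma>) = (\<integral>\<^sup>+y. ennreal (gauss_density mu \<sigma> y) * f y \<partial>lborel)"
  unfolding gauss_measure_eq_density by (simp add: nn_integral_density)

lemma prob_space_gauss_measure: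
  assumes "\<sigma> > 0"
  shows "prob_space (gauss_measure mu \<sigma>)"
proof
  have "(\<integral>\<^sup>+y. ennreal (gauss_density mu \<sigma> y) \<partial>lborel) = 1"
    unfolding gauss_density_def
    using nn_integral_cmult_normal_density[OF assms, of 1]
    by (subst nn_integral_lborel_vec_prod) auto
  then show "emeasure (gauss_measure mu \<sigma>) (space (gauss_measure mu \<sigma>)) = 1"
    by (simp add: gauss_measure_eq_density emeasure_density)
qed

lemma nn_integral_gauss_sq_norm:
  fixes mu :: "real^'m::finite"
  assumes "\<sigma> > 0"
  shows "(\<integral>\<^sup>+y. ennreal ((norm (y - mu))\<^sup>2) \<partial>gauss_measure mu \<sigma>) = ennreal (real CARD('m) * \<sigma>\<^sup>2)"
proof -
  have coordinate: "(\<integral>\<^sup>+y. ennreal ((y $ i - mu $ i)\<^sup>2 * gauss_density mu \<sigma> y) \<partial>lborel) = ennreal (\<sigma>\<^sup>2)"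
    for i
  proof -
    define h where "h j x = (if j = i then (x - mu $ j)\<^sup>2 else 1) * normal_density (mu $ j) \<sigma> x" for j x
    have "(y $ i - mu $ i)\<^sup>2 * gauss_density mu \<sigma> y = (\<Prod>j\<in>UNIV. h j (y $ j))" for y
      by (simp add: h_def gauss_density_def prod.distrib)
    moreover have "(\<integral>\<^sup>+y. ennreal (\<Prod>j\<in>UNIV. h j (y $ j)) \<partial>lborel) = (\<Prod>j\<in>UNIV. \<integral>\<^sup>+x. ennreal (h j x) \<partial>lborel)"
      by (rule nn_integral_lborel_vec_prod) (auto simp: h_def)
    moreover have "(\<integral>\<^sup>+x. ennreal (h j x) \<partial>lborel) = (if j = i then ennreal (\<sigma>\<^sup>2) else 1)" for j
      using nn_integral_sq_normal_density[OF assms] nn_integral_cmult_normal_density[OF assms, of 1]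
      by (simp add: h_def)
    ultimately show ?thesis
      by simp
  qed
  have pointwise: "ennreal (gauss_density mu \<sigma> y) * ennreal ((norm (y - mu))\<^sup>2)
      = (\<Sum>i\<in>UNIV. ennreal ((y $ i - mu $ i)\<^sup>2 * gauss_density mu \<sigma> y))" for y
  proof -
    show ?thesis
      using gauss_density_pos[OF assms, of mu y] power2_norm_vec[of "y - mu"]
      by (simp add: ennreal_mult[symmetric] sum_distrib_left sum_nonneg mult.commute)
  qed
  have "(\<integral>\<^sup>+y. ennreal ((norm (y - mu))\<^sup>2) \<partial>gauss_measure mu \<sigma>)
      = (\<integral>\<^sup>+y. (\<Sum>i\<in>UNIV. ennreal ((y $ i - mu $ i)\<^sup>2 * gauss_density mu \<sigma> y)) \<partial>lborel)"
    by (simp add: nn_integral_gauss_measure pointwise)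
  also have "\<dots> = (\<Sum>i\<in>(UNIV :: 'm set). ennreal (\<sigma>\<^sup>2))"
    by (subst nn_integral_sum) (simp_all only: coordinate, measurable)
  also have "\<dots> = ennreal (real CARD('m) * \<sigma>\<^sup>2)"
    by (simp add: ennreal_of_nat_eq_real_of_nat ennreal_mult')
  finally show ?thesis .
qed

lemma nn_integral_gauss_exp_inner:
  fixes mu a :: "real^'m::finite"
  assumes "\<sigma> > 0"
  shows "(\<integral>\<^sup>+y. ennreal (exp (t * inner a (y - mu))) \<partial>gauss_measure mu \<sigma>)
    = ennreal (exp (t\<^sup>2 * \<sigma>\<^sup>2 * (norm a)\<^sup>2 / 2))"
proof -
  define h where "h j x = exp ((t * a $ j) * (x - mu $ j)) * normal_density (mu $ j) \<sigma> x" for j x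
  have "gauss_density mu \<sigma> y * exp (t * inner a (y - mu)) = (\<Prod>j\<in>UNIV. h j (y $ j))" for y
    by (simp add: h_def gauss_density_def inner_vec_def sum_distrib_left exp_sum prod.distrib ac_simps)
  then have "(\<integral>\<^sup>+y. ennreal (exp (t * inner a (y - mu))) \<partial>gauss_measure mu \<sigma>)
      = (\<integral>\<^sup>+y. ennreal (\<Prod>j\<in>UNIV. h j (y $ j)) \<partial>lborel)"
    using gauss_density_pos[OF assms, of mu]
    by (simp add: nn_integral_gauss_measure ennreal_mult[symmetric] less_imp_le)
  also have "\<dots> = (\<Prod>j\<in>UNIV. \<integral>\<^sup>+x. ennreal (h j x) \<partial>lborel)"
    by (rule nn_integral_lborel_vec_prod) (auto simp: h_def)
  also have "\<dots> = (\<Prod>j\<in>UNIV. ennreal (exp ((t * a $ j)\<^sup>2 * \<sigma>\<^sup>2 / 2)))"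
    by (simp add: h_def exp_mult_normal_density[OF assms] nn_integral_cmult_normal_density[OF assms])
  also have "\<dots> = ennreal (exp (t\<^sup>2 * \<sigma>\<^sup>2 * (norm a)\<^sup>2 / 2))"
    by (simp add: prod_ennreal exp_sum[symmetric] power2_norm_vec sum_divide_distrib sum_distrib_left
        power_mult_distrib ac_simps)
  finally show ?thesis .
qed

lemma nn_integral_gauss_density_powr:
  fixes a b :: "real^'m::finite"
  assumes "\<sigma> > 0"
  shows "(\<integral>\<^sup>+y. ennreal (gauss_density a \<sigma> y powr l * gauss_density b \<sigma> y powr (1 - l)) \<partial>lborel)
    = ennreal (exp (l * (l - 1) * (norm (a - b))\<^sup>2 / (2 * \<sigma>\<^sup>2)))"
proof -
  define h where "h j x = normal_density (a $ j) \<sigma> x powr l * normal_density (b $ j) \<sigma> x powr (1 - l)" for j x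
  have "(\<integral>\<^sup>+y. ennreal (gauss_density a \<sigma> y powr l * gauss_density b \<sigma> y powr (1 - l)) \<partial>lborel)
      = (\<integral>\<^sup>+y. ennreal (\<Prod>j\<in>UNIV. h j (y $ j)) \<partial>lborel)"
    by (simp add: h_def gauss_density_def prod_powr_distrib prod.distrib)
  also have "\<dots> = (\<Prod>j\<in>UNIV. \<integral>\<^sup>+x. ennreal (h j x) \<partial>lborel)"
    by (rule nn_integral_lborel_vec_prod) (auto simp: h_def)
  also have "\<dots> = (\<Prod>j\<in>UNIV. ennreal (exp (l * (l - 1) * (a $ j - b $ j)\<^sup>2 / (2 * \<sigma>\<^sup>2))))"
    by (simp add: h_def normal_density_powr_mult_powr[OF assms] nn_integral_cmult_normal_density[OF assms])
  also have "\<dots> = ennreal (exp (l * (l - 1) * (norm (a - b))\<^sup>2 / (2 * \<sigma>\<^sup>2)))"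
    by (simp add: prod_ennreal exp_sum[symmetric] power2_norm_vec sum_divide_distrib sum_distrib_left ac_simps)
  finally show ?thesis .
qed

lemma gauss_measure_eq_density_ratio:
  assumes "\<sigma> > 0"
  shows "gauss_measure a \<sigma>
    = density (gauss_measure b \<sigma>) (\<lambda>y. ennreal (gauss_density a \<sigma> y / gauss_density b \<sigma> y))"
proof -
  have "density (gauss_measure b \<sigma>) (\<lambda>y. ennreal (gauss_density a \<sigma> y / gauss_density b \<sigma> y))
      = density lborel (\<lambda>y. ennreal (gauss_density b \<sigma> y) * ennreal (gauss_density a \<sigma> y / gauss_density b \<sigma> y))"
    unfolding gauss_measure_eq_density by (rule density_density_eq) auto
  also have "(\<lambda>y. ennreal (gauss_density b \<sigma> y) * ennreal (gauss_density a \<sigma> y / gauss_density b \<sigma> y))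
      = (\<lambda>y. ennreal (gauss_density a \<sigma> y))"
    using gauss_density_pos[OF assms, of b] gauss_density_pos[OF assms, of a]
    by (simp add: ennreal_mult[symmetric] less_imp_le less_imp_neq[symmetric])
  finally show ?thesis
    by (simp add: gauss_measure_eq_density)
qed

section \<open>Post-processing and Renyi divergence\<close>

lemma Youngs_inequality_powr:
  fixes a b l :: real
  assumes "0 \<le> a" "0 \<le> b" "1 < l"
  shows "b powr (l - 1) * a \<le> 1 / l * a powr l + (1 - 1 / l) * b powr l"
proof -
  have "a * b powr (l - 1) \<le> a powr l / l + (b powr (l - 1)) powr (l / (l - 1)) / (l / (l - 1))"
    using assms by (intro Youngs_inequality) (auto simp: field_simps)
  also have "(b powr (l - 1)) powr (l / (l - 1)) = b powr l"
    using assms by (simp add: powr_powr)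
  finally show ?thesis
    using assms by (simp add: field_simps)
qed

lemma ennreal_le_of_le_convex_comb:
  fixes A B :: ennreal and \<theta> :: real
  assumes "B \<le> ennreal \<theta> * A + ennreal (1 - \<theta>) * B" "B < \<infinity>" "0 < \<theta>" "\<theta> \<le> 1"
  shows "B \<le> A"
proof (cases "A = \<infinity>")
  case False
  then obtain a b where ab: "A = ennreal a" "0 \<le> a" "B = ennreal b" "0 \<le> b"
    using assms(2) by (cases A; cases B) auto
  with assms have "b \<le> \<theta> * a + (1 - \<theta>) * b"
    by (simp add: ennreal_mult[symmetric] ennreal_plus[symmetric] del: ennreal_plus)
  then have "b \<le> a"
    using assms(3) by (simp add: algebra_simps)
  then show ?thesis
    using ab by (simp add: ennreal_leI)
qed simp

text \<open>Jensen's inequality for \<open>x powr l\<close> and conditional expectations: \<open>cond_exp\<close> says that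
  \<open>G \<circ> T\<close> is the conditional expectation of \<open>f\<close> given \<open>T\<close>. Truncating \<open>G\<close> at \<open>k\<close> keeps the
  left-hand side finite, so that the Young-inequality term can be absorbed.\<close>

lemma nn_integral_min_cond_exp_powr_le:
  fixes f :: "'a \<Rightarrow> real" and G :: "'b \<Rightarrow> real"
  assumes "prob_space M" and l: "1 < l" and k: "0 < k"
    and [measurable]: "f \<in> borel_measurable M" "T \<in> measurable M N" "G \<in> borel_measurable N"
    and f_nonneg: "\<And>y. 0 \<le> f y" and G_nonneg: "\<And>z. 0 \<le> G z"
    and cond_exp: "\<And>h. h \<in> borel_measurable N \<Longrightarrow>
       (\<integral>\<^sup>+y. h (T y) * ennreal (f y) \<partial>M) = (\<integral>\<^sup>+y. h (T y) * ennreal (G (T y)) \<partial>M)"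
  shows "(\<integral>\<^sup>+y. ennreal (min (G (T y)) k powr l) \<partial>M) \<le> (\<integral>\<^sup>+y. ennreal (f y powr l) \<partial>M)"
proof -
  interpret prob_space M by fact
  define Gk where "Gk y = min (G (T y)) k" for y
  have Gk_nonneg: "0 \<le> Gk y" for y
    using G_nonneg k by (simp add: Gk_def)
  have [measurable]: "Gk \<in> borel_measurable M"
    unfolding Gk_def by measurable
  define A where "A = (\<integral>\<^sup>+y. ennreal (f y powr l) \<partial>M)"
  define B where "B = (\<integral>\<^sup>+y. ennreal (Gk y powr l) \<partial>M)"
  have "B \<le> (\<integral>\<^sup>+y. ennreal (k powr l) \<partial>M)"
    unfolding B_def using l Gk_nonneg
    by (intro nn_integral_mono ennreal_leI powr_mono2) (auto simp: Gk_def)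
  then have B_finite: "B < \<infinity>"
    by (simp add: emeasure_space_1 top.not_eq_extremum le_less_trans)
  have "Gk y powr l \<le> Gk y powr (l - 1) * G (T y)" for y
  proof -
    have "Gk y powr l = Gk y * Gk y powr (l - 1)"
      using powr_mult_base[OF Gk_nonneg[of y], of "l - 1"] by simp
    also have "\<dots> \<le> G (T y) * Gk y powr (l - 1)"
      by (intro mult_right_mono) (auto simp: Gk_def)
    finally show ?thesis
      by (simp add: mult.commute)
  qed
  then have "B \<le> (\<integral>\<^sup>+y. ennreal (Gk y powr (l - 1)) * ennreal (G (T y)) \<partial>M)"
    unfolding B_def using G_nonneg
    by (intro nn_integral_mono) (simp add: ennreal_mult[symmetric] ennreal_leI)
  also have "\<dots> = (\<integral>\<^sup>+y. ennreal (Gk y powr (l - 1)) * ennreal (f y) \<partial>M)"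
    using cond_exp[of "\<lambda>z. ennreal (min (G z) k powr (l - 1))"] by (simp add: Gk_def)
  also have "\<dots> \<le> (\<integral>\<^sup>+y. ennreal (1 / l) * ennreal (f y powr l) + ennreal (1 - 1 / l) * ennreal (Gk y powr l) \<partial>M)"
    using Youngs_inequality_powr[OF f_nonneg Gk_nonneg l] l f_nonneg
    by (intro nn_integral_mono) (simp add: ennreal_mult[symmetric] ennreal_plus[symmetric] ennreal_leI del: ennreal_plus)
  also have "\<dots> = ennreal (1 / l) * A + ennreal (1 - 1 / l) * B"
    unfolding A_def B_def by (simp add: nn_integral_add nn_integral_cmult)
  finally have "B \<le> A"
    by (rule ennreal_le_of_le_convex_comb[OF _ B_finite]) (use l in auto)
  then show ?thesis
    by (simp add: A_def B_def Gk_def)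
qed

lemma nn_integral_cond_exp_powr_le:
  fixes f :: "'a \<Rightarrow> real" and G :: "'b \<Rightarrow> real"
  assumes "prob_space M" and l: "1 < l"
    and [measurable]: "f \<in> borel_measurable M" "T \<in> measurable M N" "G \<in> borel_measurable N"
    and f_nonneg: "\<And>y. 0 \<le> f y" and G_nonneg: "\<And>z. 0 \<le> G z"
    and cond_exp: "\<And>h. h \<in> borel_measurable N \<Longrightarrow>
       (\<integral>\<^sup>+y. h (T y) * ennreal (f y) \<partial>M) = (\<integral>\<^sup>+y. h (T y) * ennreal (G (T y)) \<partial>M)"
  shows "(\<integral>\<^sup>+y. ennreal (G (T y) powr l) \<partial>M) \<le> (\<integral>\<^sup>+y. ennreal (f y powr l) \<partial>M)"
proof -
  define F where "F n y = ennreal (min (G (T y)) (real (Suc n)) powr l)" for n y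
  have [measurable]: "F n \<in> borel_measurable M" for n
    unfolding F_def by measurable
  have "incseq F"
    unfolding incseq_def le_fun_def F_def using G_nonneg l
    by (intro allI impI ennreal_leI powr_mono2) auto
  have SUP_F: "(SUP n. F n y) = ennreal (G (T y) powr l)" for y
  proof (rule antisym)
    show "(SUP n. F n y) \<le> ennreal (G (T y) powr l)"
      unfolding F_def using G_nonneg l by (intro SUP_least ennreal_leI powr_mono2) auto
    obtain n :: nat where "G (T y) \<le> real n"
      using real_arch_simple by blast
    then have "F n y = ennreal (G (T y) powr l)"
      by (simp add: F_def)
    then show "ennreal (G (T y) powr l) \<le> (SUP n. F n y)"
      using SUP_upper[of n UNIV "\<lambda>n. F n y"] by simp
  qed
  have "(\<integral>\<^sup>+y. ennreal (G (T y) powr l) \<partial>M) = (SUP n. \<integral>\<^sup>+y. F n y \<partial>M)"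
    unfolding SUP_F[symmetric] by (rule nn_integral_monotone_convergence_SUP) fact+
  also have "\<dots> \<le> (\<integral>\<^sup>+y. ennreal (f y powr l) \<partial>M)"
    unfolding F_def
    by (intro SUP_least nn_integral_min_cond_exp_powr_le[OF assms(1) l _ assms(3-5) f_nonneg G_nonneg cond_exp])
       auto
  finally show ?thesis .
qed

lemma absolutely_continuous_distr:
  assumes ac: "absolutely_continuous M N" and sets: "sets N = sets M" and T: "T \<in> measurable M M'"
  shows "absolutely_continuous (distr M M' T) (distr N M' T)"
  unfolding absolutely_continuous_def
proof
  fix A assume "A \<in> null_sets (distr M M' T)"
  then have "T -` A \<inter> space M \<in> null_sets N" "A \<in> sets M'"
    using ac T by (auto simp: null_sets_distr_iff absolutely_continuous_def)
  moreover have "T \<in> measurable N M'"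
    using T sets by (simp cong: measurable_cong_sets)
  ultimately show "A \<in> null_sets (distr N M' T)"
    using sets_eq_imp_space_eq[OF sets] by (simp add: null_sets_distr_iff)
qed

lemma nn_integral_RN_deriv_powr:
  assumes "sigma_finite_measure M" "sigma_finite_measure N"
    and ac: "absolutely_continuous M N" and sets: "sets N = sets M"
  shows "(\<integral>\<^sup>+x. ennreal (enn2real (RN_deriv M N x) powr (l - 1)) \<partial>N)
    = (\<integral>\<^sup>+x. ennreal (enn2real (RN_deriv M N x) powr l) \<partial>M)"
proof -
  interpret sigma_finite_measure M by fact
  have "AE x in M. RN_deriv M N x \<noteq> \<infinity>"
    by (rule RN_deriv_finite) fact+
  then have "AE x in M. RN_deriv M N x * ennreal (enn2real (RN_deriv M N x) powr (l - 1))
      = ennreal (enn2real (RN_deriv M N x) powr l)"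
  proof eventually_elim
    case (elim x)
    define r where "r = enn2real (RN_deriv M N x)"
    have RN: "RN_deriv M N x = ennreal r"
      using elim by (simp add: r_def less_top)
    have "r * r powr (l - 1) = r powr l"
      using powr_mult_base[of r "l - 1"] by (simp add: r_def)
    then show ?case
      unfolding r_def[symmetric] RN by (simp add: ennreal_mult[symmetric] r_def)
  qed
  then show ?thesis
    using ac sets by (simp add: RN_deriv_nn_integral nn_integral_cong_AE)
qed

lemma renyi_div_le_of_moment_le:
  assumes "sigma_finite_measure Q" "sigma_finite_measure P"
    and ac: "absolutely_continuous Q P" and sets: "sets P = sets Q"
    and l: "1 < l" and B: "0 \<le> B"
    and moment: "(\<integral>\<^sup>+x. ennreal (enn2real (RN_deriv Q P x) powr l) \<partial>Q) \<le> ennreal (exp ((l - 1) * B))"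
  shows "renyi_div l P Q \<le> ereal B"
proof -
  define E where "E = (\<integral>\<^sup>+x. ennreal (enn2real (RN_deriv Q P x) powr (l - 1)) \<partial>P)"
  have E_le: "E \<le> ennreal (exp ((l - 1) * B))"
    unfolding E_def using moment by (simp add: nn_integral_RN_deriv_powr assms(1-4))
  then have "E \<noteq> \<infinity>"
    by (auto simp: top_unique)
  have "ln (enn2real E) \<le> (l - 1) * B"
  proof (cases "enn2real E = 0")
    case False
    then have "ln (enn2real E) \<le> ln (exp ((l - 1) * B))"
      using E_le by (subst ln_le_cancel_iff) (auto simp: enn2real_leI less_le)
    then show ?thesis
      by simp
  qed (use l B in simp) \<comment> \<open>a vanishing moment is harmless since \<open>ln 0 = 0\<close>\<close>
  then have "ln (enn2real E) / (l - 1) \<le> B"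
    using l by (simp add: divide_le_eq mult.commute)
  then show ?thesis
    using ac sets \<open>E \<noteq> \<infinity>\<close> by (simp add: renyi_div_def E_def[symmetric] Let_def)
qed

lemma nn_integral_RN_deriv_distr_powr_le:
  fixes f :: "'a \<Rightarrow> real" and T :: "'a \<Rightarrow> 'b"
  assumes M: "prob_space M" and P: "prob_space (density M (\<lambda>y. ennreal (f y)))"
    and [measurable]: "f \<in> borel_measurable M" "T \<in> measurable M N"
    and f_nonneg: "\<And>y. 0 \<le> f y" and l: "1 < l"
  defines "Q \<equiv> distr M N T" and "P \<equiv> distr (density M (\<lambda>y. ennreal (f y))) N T"
  shows "(\<integral>\<^sup>+z. ennreal (enn2real (RN_deriv Q P z) powr l) \<partial>Q) \<le> (\<integral>\<^sup>+y. ennreal (f y powr l) \<partial>M)"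
proof -
  interpret Q: prob_space Q
    unfolding Q_def by (rule prob_space.prob_space_distr[OF M]) measurable
  interpret P: prob_space P
    unfolding P_def by (rule prob_space.prob_space_distr[OF P]) measurable
  have sets_Q [measurable_cong]: "sets Q = sets N" and sets_P: "sets P = sets Q"
    by (simp_all add: P_def Q_def)
  have ac: "absolutely_continuous Q P"
    unfolding P_def Q_def by (intro absolutely_continuous_distr absolutely_continuousI_density) auto
  define g where "g = RN_deriv Q P"
  define G where "G z = enn2real (g z)" for z
  have [measurable]: "g \<in> borel_measurable N" "G \<in> borel_measurable N"
    unfolding G_def g_def by (simp_all cong: measurable_cong_sets)
  have density_g: "density Q g = P"
    unfolding g_def by (rule Q.density_RN_deriv[OF ac sets_P])
  have "AE z in Q. g z \<noteq> \<infinity>"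
    unfolding g_def by (rule Q.RN_deriv_finite[OF P.sigma_finite_measure_axioms ac sets_P])
  then have g_G: "AE z in Q. g z = ennreal (G z)"
    by eventually_elim (simp add: G_def less_top)
  have cond_exp: "(\<integral>\<^sup>+y. h (T y) * ennreal (f y) \<partial>M) = (\<integral>\<^sup>+y. h (T y) * ennreal (G (T y)) \<partial>M)"
    if [measurable]: "h \<in> borel_measurable N" for h
  proof -
    have "(\<integral>\<^sup>+y. h (T y) * ennreal (f y) \<partial>M) = (\<integral>\<^sup>+z. h z \<partial>P)"
      unfolding P_def by (simp add: nn_integral_distr nn_integral_density mult.commute)
    also have "\<dots> = (\<integral>\<^sup>+z. g z * h z \<partial>Q)"
      unfolding density_g[symmetric] by (simp add: nn_integral_density)
    also have "\<dots> = (\<integral>\<^sup>+z. h z * ennreal (G z) \<partial>Q)"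
      using g_G by (auto intro!: nn_integral_cong_AE simp: mult.commute)
    also have "\<dots> = (\<integral>\<^sup>+y. h (T y) * ennreal (G (T y)) \<partial>M)"
      unfolding Q_def by (simp add: nn_integral_distr)
    finally show ?thesis .
  qed
  have "(\<integral>\<^sup>+z. ennreal (G z powr l) \<partial>Q) = (\<integral>\<^sup>+y. ennreal (G (T y) powr l) \<partial>M)"
    unfolding Q_def by (simp add: nn_integral_distr)
  also have "\<dots> \<le> (\<integral>\<^sup>+y. ennreal (f y powr l) \<partial>M)"
    by (rule nn_integral_cond_exp_powr_le[where G = G and T = T, OF M l _ _ _ f_nonneg _ cond_exp])
       (auto simp: G_def)
  finally show ?thesis
    by (simp add: G_def g_def)
qed

lemma renyi_div_distr_gauss_le:
  fixes a b :: "real^'m::finite"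
  assumes \<sigma>: "\<sigma> > 0" and [measurable]: "T \<in> borel_measurable borel" and l: "1 < l"
  shows "renyi_div l (distr (gauss_measure a \<sigma>) borel T) (distr (gauss_measure b \<sigma>) borel T)
    \<le> ereal (l * (norm (a - b))\<^sup>2 / (2 * \<sigma>\<^sup>2))"
proof -
  define f where "f y = gauss_density a \<sigma> y / gauss_density b \<sigma> y" for y
  have [measurable]: "f \<in> borel_measurable borel"
    unfolding f_def by measurable
  have f_nonneg: "0 \<le> f y" for y
    using gauss_density_pos[OF \<sigma>, of a y] gauss_density_pos[OF \<sigma>, of b y] by (simp add: f_def)
  have ratio: "gauss_measure a \<sigma> = density (gauss_measure b \<sigma>) (\<lambda>y. ennreal (f y))"
    unfolding f_def by (rule gauss_measure_eq_density_ratio[OF \<sigma>])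
  have prob: "prob_space (distr (gauss_measure c \<sigma>) borel T)" for c
    by (intro prob_space.prob_space_distr prob_space_gauss_measure[OF \<sigma>]) simp
  have ac: "absolutely_continuous (distr (gauss_measure b \<sigma>) borel T) (distr (gauss_measure a \<sigma>) borel T)"
    unfolding ratio by (intro absolutely_continuous_distr absolutely_continuousI_density) auto
  have "(\<integral>\<^sup>+z. ennreal (enn2real (RN_deriv (distr (gauss_measure b \<sigma>) borel T)
        (distr (gauss_measure a \<sigma>) borel T) z) powr l) \<partial>distr (gauss_measure b \<sigma>) borel T)
      \<le> (\<integral>\<^sup>+y. ennreal (f y powr l) \<partial>gauss_measure b \<sigma>)"
    unfolding ratio
    by (rule nn_integral_RN_deriv_distr_powr_le[OF prob_space_gauss_measure[OF \<sigma>]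
          prob_space_gauss_measure[OF \<sigma>, of a, unfolded ratio]])
       (use f_nonneg l in auto)
  also have "\<dots> = (\<integral>\<^sup>+y. ennreal (gauss_density a \<sigma> y powr l * gauss_density b \<sigma> y powr (1 - l)) \<partial>lborel)"
  proof -
    have "gauss_density b \<sigma> y * f y powr l = gauss_density a \<sigma> y powr l * gauss_density b \<sigma> y powr (1 - l)" for y
      using gauss_density_pos[OF \<sigma>, of a y] gauss_density_pos[OF \<sigma>, of b y]
      by (simp add: f_def powr_divide powr_diff field_simps)
    then show ?thesis
      using gauss_density_pos[OF \<sigma>, of b]
      by (simp add: nn_integral_gauss_measure ennreal_mult[symmetric] less_imp_le)
  qed
  also have "\<dots> = ennreal (exp ((l - 1) * (l * (norm (a - b))\<^sup>2 / (2 * \<sigma>\<^sup>2))))"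
    by (simp add: nn_integral_gauss_density_powr[OF \<sigma>] ac_simps)
  finally show ?thesis
    using l by (intro renyi_div_le_of_moment_le prob_space_imp_sigma_finite prob ac) auto
qed

lemma renyi_star_distr_gauss_le:
  fixes a b :: "real^'m::finite"
  assumes "\<sigma> > 0" and "T \<in> borel_measurable borel"
  shows "renyi_star (distr (gauss_measure a \<sigma>) borel T) (distr (gauss_measure b \<sigma>) borel T)
    \<le> ereal ((norm (a - b))\<^sup>2 / (2 * \<sigma>\<^sup>2))"
  unfolding renyi_star_def
proof (rule SUP_least)
  fix l :: real assume "l \<in> {1<..}"
  then have l: "1 < l"
    by simp
  show "renyi_div l (distr (gauss_measure a \<sigma>) borel T) (distr (gauss_measure b \<sigma>) borel T) / ereal l
      \<le> ereal ((norm (a - b))\<^sup>2 / (2 * \<sigma>\<^sup>2))" (is "?D / _ \<le> _")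
    using renyi_div_distr_gauss_le[OF assms l, of a b] l by (cases ?D) (auto simp: field_simps)
qed

section \<open>Accuracy of the projected Gaussian\<close>

lemma borel_measurable_closest_point:
  assumes "convex K" "closed K" "K \<noteq> {}"
  shows "closest_point K \<in> borel_measurable (borel :: ('a::euclidean_space) measure)"
  by (intro borel_measurable_continuous_onI continuous_on_closest_point assms)

lemma nn_integral_distr_closest_point_sq_le:
  fixes mu :: "real^'m::finite"
  assumes \<sigma>: "\<sigma> > 0" and K: "convex K" "closed K" and mu: "mu \<in> K"
  shows "(\<integral>\<^sup>+y. ennreal ((norm (y - mu))\<^sup>2 / real CARD('m)) \<partial>distr (gauss_measure mu \<sigma>) borel (closest_point K))
    \<le> ennreal (\<sigma>\<^sup>2)"
proof -
  have [measurable]: "closest_point K \<in> borel_measurable borel"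
    using K mu by (intro borel_measurable_closest_point) auto
  have "norm (closest_point K y - mu) \<le> norm (y - mu)" for y
    using closest_point_lipschitz[OF K, of y mu] closest_point_self[OF mu] mu by (auto simp: dist_norm)
  then have "(\<integral>\<^sup>+y. ennreal ((norm (y - mu))\<^sup>2 / real CARD('m)) \<partial>distr (gauss_measure mu \<sigma>) borel (closest_point K))
      \<le> (\<integral>\<^sup>+y. ennreal ((norm (y - mu))\<^sup>2) * ennreal (1 / real CARD('m)) \<partial>gauss_measure mu \<sigma>)"
    by (auto simp: nn_integral_distr ennreal_mult[symmetric] intro!: nn_integral_mono ennreal_leI
        divide_right_mono power_mono)
  also have "\<dots> = ennreal (real CARD('m) * \<sigma>\<^sup>2) * ennreal (1 / real CARD('m))"
    by (simp add: nn_integral_multc nn_integral_gauss_sq_norm[OF \<sigma>])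
  also have "\<dots> = ennreal (\<sigma>\<^sup>2)"
    by (simp add: ennreal_mult[symmetric])
  finally show ?thesis .
qed

lemma closest_point_sq_dist_le_Max_inner:
  fixes A :: "'a::euclidean_space set"
  assumes A: "finite A" "A \<noteq> {}" and mu: "mu \<in> closure (convex hull A)"
  shows "(norm (closest_point (closure (convex hull A)) y - mu))\<^sup>2 \<le> Max ((\<lambda>a. inner (a - mu) (y - mu)) ` A)"
proof -
  define K where "K = closure (convex hull A)"
  define p where "p = closest_point K y"
  define W where "W = Max ((\<lambda>a. inner (a - mu) (y - mu)) ` A)"
  have K: "convex K" "closed K"
    by (simp_all add: K_def)
  have "inner (y - p) (mu - p) \<le> 0"
    unfolding p_def by (rule closest_point_dot[OF K]) (use mu in \<open>simp add: K_def\<close>)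
  then have "(norm (p - mu))\<^sup>2 \<le> inner (p - mu) (y - mu)"
    by (simp add: power2_norm_eq_inner algebra_simps inner_commute)
  also have "inner (p - mu) (y - mu) \<le> W"
  proof -
    have "A \<subseteq> {v. inner (y - mu) v \<le> W + inner (y - mu) mu}"
    proof
      fix a assume "a \<in> A"
      then have "inner (a - mu) (y - mu) \<le> W"
        unfolding W_def using A by (intro Max_ge) auto
      then show "a \<in> {v. inner (y - mu) v \<le> W + inner (y - mu) mu}"
        by (simp add: inner_diff_left inner_commute)
    qed
    then have "K \<subseteq> {v. inner (y - mu) v \<le> W + inner (y - mu) mu}"
      unfolding K_def
      by (intro closure_minimal hull_minimal convex_halfspace_le closed_halfspace_le)
    moreover have "p \<in> K"
      unfolding p_def using K mu by (intro closest_point_in_set) (auto simp: K_def)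
    ultimately show ?thesis
      by (auto simp: inner_diff_left inner_commute)
  qed
  finally show ?thesis
    by (simp add: p_def K_def W_def)
qed

lemma le_mult_sqrt_of_forall_le:
  fixes i L s :: real
  assumes L: "0 \<le> L" and s: "0 \<le> s" and bound: "\<And>t. 0 < t \<Longrightarrow> t * i \<le> L + t\<^sup>2 * s\<^sup>2 / 2"
  shows "i \<le> s * sqrt (2 * L)"
proof (cases "0 < L \<and> 0 < s")
  case True
  define t where "t = sqrt (2 * L) / s"
  have t: "t > 0" "t\<^sup>2 * s\<^sup>2 / 2 = L"
    using True by (simp_all add: t_def power_divide)
  have "sqrt (2 * L) * sqrt (2 * L) = 2 * L"
    using True by simp
  then have "2 * L / t = s * sqrt (2 * L)"
    using True by (simp add: t_def field_simps)
  moreover have "t * i \<le> 2 * L"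
    using bound[OF t(1)] t(2) by simp
  then have "i \<le> 2 * L / t"
    using t(1) by (simp add: le_divide_eq mult.commute)
  ultimately show ?thesis
    by simp
next
  case False
  show ?thesis
  proof (rule ccontr)
    assume "\<not> i \<le> s * sqrt (2 * L)"
    with False L s have "0 < i" and "L = 0 \<or> s = 0"
      by auto
    then show False
    proof (cases "s = 0")
      case True
      then show False
        using bound[of "(L + 1) / i"] \<open>0 < i\<close> L by (simp add: field_simps)
    next
      case False
      with \<open>L = 0 \<or> s = 0\<close> s have "L = 0" "0 < s"
        by auto
      then show False
        using bound[of "i / s\<^sup>2"] \<open>0 < i\<close> by (simp add: field_simps power2_eq_square)
    qed
  qed
qed

lemma mult_add_one_le_sum_exp:
  fixes z :: "'i \<Rightarrow> real"
  assumes "finite A" "A \<noteq> {}" "w \<le> Max (z ` A)" "0 \<le> t"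
  shows "t * w + 1 \<le> (\<Sum>a\<in>A. exp (t * z a)) * exp (- c) + c"
proof -
  have "Max (z ` A) \<in> z ` A"
    using assms by (intro Max_in) auto
  then obtain a where a: "a \<in> A" "Max (z ` A) = z a"
    by auto
  then have "t * w \<le> t * z a"
    using assms by (simp add: mult_left_mono)
  then have "t * w - c + 1 \<le> exp (t * z a - c)"
    using exp_ge_add_one_self[of "t * z a - c"] by linarith
  also have "\<dots> = exp (t * z a) * exp (- c)"
    by (simp add: exp_diff exp_minus field_simps)
  also have "exp (t * z a) \<le> (\<Sum>a\<in>A. exp (t * z a))"
    using a assms by (intro member_le_sum) auto
  finally show ?thesis
    by simp
qed

lemma nn_integral_Max_subgaussian_mult_le:
  fixes Z :: "'i \<Rightarrow> 'a \<Rightarrow> real" and W :: "'a \<Rightarrow> real"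
  assumes M: "prob_space M" and A: "finite A" "A \<noteq> {}" and t: "0 < t"
    and [measurable]: "\<And>a. a \<in> A \<Longrightarrow> Z a \<in> borel_measurable M" "W \<in> borel_measurable M"
    and W_le: "\<And>y. W y \<le> Max ((\<lambda>a. Z a y) ` A)" and W_nonneg: "\<And>y. 0 \<le> W y"
    and mgf: "\<And>a. a \<in> A \<Longrightarrow> (\<integral>\<^sup>+y. ennreal (exp (t * Z a y)) \<partial>M) \<le> ennreal (exp (t\<^sup>2 * s\<^sup>2 / 2))"
  shows "ennreal t * (\<integral>\<^sup>+y. ennreal (W y) \<partial>M) \<le> ennreal (ln (real (card A)) + t\<^sup>2 * s\<^sup>2 / 2)"
proof -
  interpret prob_space M by fact
  \<comment> \<open>\<open>c\<close> is chosen so that the right-hand side below integrates to \<open>1 + c\<close>\<close>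
  define c where "c = ln (real (card A)) + t\<^sup>2 * s\<^sup>2 / 2"
  have card: "1 \<le> real (card A)"
    using A by (simp add: Suc_le_eq card_gt_0_iff)
  then have c: "0 \<le> c"
    by (simp add: c_def)
  have "ennreal t * (\<integral>\<^sup>+y. ennreal (W y) \<partial>M) + 1 = (\<integral>\<^sup>+y. ennreal (t * W y + 1) \<partial>M)"
    using t W_nonneg by (simp add: nn_integral_add nn_integral_cmult emeasure_space_1 ennreal_mult)
  also have "\<dots> \<le> (\<integral>\<^sup>+y. (\<Sum>a\<in>A. ennreal (exp (t * Z a y))) * ennreal (exp (- c)) + ennreal c \<partial>M)"
    using mult_add_one_le_sum_exp[OF A W_le, of t _ c] t c
    by (intro nn_integral_mono) (simp add: ennreal_mult[symmetric] ennreal_plus[symmetric] sum_nonneg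
        ennreal_leI del: ennreal_plus)
  also have "\<dots> = (\<Sum>a\<in>A. \<integral>\<^sup>+y. ennreal (exp (t * Z a y)) \<partial>M) * ennreal (exp (- c)) + ennreal c"
    by (simp add: nn_integral_add nn_integral_multc nn_integral_sum emeasure_space_1 del: sum_ennreal)
  also have "\<dots> \<le> (\<Sum>a\<in>A. ennreal (exp (t\<^sup>2 * s\<^sup>2 / 2))) * ennreal (exp (- c)) + ennreal c"
    using mgf by (intro add_mono mult_right_mono sum_mono) auto
  also have "\<dots> = 1 + ennreal c"
  proof -
    have "exp c = real (card A) * exp (t\<^sup>2 * s\<^sup>2 / 2)"
      using card by (simp add: c_def exp_add)
    then have "real (card A) * exp (t\<^sup>2 * s\<^sup>2 / 2) * exp (- c) = 1"
      using card by (simp add: exp_minus field_simps)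
    then show ?thesis
      by (simp add: ennreal_mult[symmetric] ennreal_of_nat_eq_real_of_nat mult.commute)
  qed
  finally show ?thesis
    by (simp add: c_def add.commute ennreal_add_left_cancel_le)
qed

lemma nn_integral_le_Max_subgaussian:
  fixes Z :: "'i \<Rightarrow> 'a \<Rightarrow> real" and W :: "'a \<Rightarrow> real"
  assumes M: "prob_space M" and A: "finite A" "A \<noteq> {}" and s: "0 \<le> s"
    and [measurable]: "\<And>a. a \<in> A \<Longrightarrow> Z a \<in> borel_measurable M" "W \<in> borel_measurable M"
    and W_le: "\<And>y. W y \<le> Max ((\<lambda>a. Z a y) ` A)" and W_nonneg: "\<And>y. 0 \<le> W y"
    and mgf: "\<And>a t. a \<in> A \<Longrightarrow> 0 < t \<Longrightarrow> (\<integral>\<^sup>+y. ennreal (exp (t * Z a y)) \<partial>M) \<le> ennreal (exp (t\<^sup>2 * s\<^sup>2 / 2))"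
  shows "(\<integral>\<^sup>+y. ennreal (W y) \<partial>M) \<le> ennreal (s * sqrt (2 * ln (real (card A))))"
proof -
  note bound = nn_integral_Max_subgaussian_mult_le[OF M A _ _ _ W_le W_nonneg mgf]
  obtain i where i: "(\<integral>\<^sup>+y. ennreal (W y) \<partial>M) = ennreal i" "0 \<le> i"
    using bound[of 1] by (cases "\<integral>\<^sup>+y. ennreal (W y) \<partial>M") (auto simp: top_unique)
  have "0 \<le> ln (real (card A))"
    using A by (simp add: Suc_le_eq card_gt_0_iff)
  moreover have "t * i \<le> ln (real (card A)) + t\<^sup>2 * s\<^sup>2 / 2" if "0 < t" for t
    using bound[OF that] that i \<open>0 \<le> ln (real (card A))\<close>
    by (simp add: ennreal_mult[symmetric] del: ennreal_plus)
  ultimately have "i \<le> s * sqrt (2 * ln (real (card A)))"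
    using s by (intro le_mult_sqrt_of_forall_le)
  then show ?thesis
    by (simp add: i ennreal_leI)
qed

lemma norm_diff_le_of_closure_convex_hull:
  fixes a :: "'a::euclidean_space"
  assumes "mu \<in> closure (convex hull A)" and "\<And>b. b \<in> A \<Longrightarrow> norm (a - b) \<le> D"
  shows "norm (a - mu) \<le> D"
proof -
  have "closure (convex hull A) \<subseteq> cball a D"
    using assms(2) by (intro closure_minimal hull_minimal) (auto simp: dist_norm)
  then show ?thesis
    using assms(1) by (auto simp: dist_norm)
qed

lemma nn_integral_distr_closest_point_sq_le_sqrt_ln:
  fixes mu :: "real^'m::finite" and A :: "(real^'m) set"
  assumes \<sigma>: "\<sigma> > 0" and A: "finite A" "A \<noteq> {}" and mu: "mu \<in> closure (convex hull A)"
    and D: "\<And>a b. a \<in> A \<Longrightarrow> b \<in> A \<Longrightarrow> norm (a - b) \<le> D"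
  shows "(\<integral>\<^sup>+y. ennreal ((norm (y - mu))\<^sup>2 / real CARD('m))
      \<partial>distr (gauss_measure mu \<sigma>) borel (closest_point (closure (convex hull A))))
    \<le> ennreal (\<sigma> * D * sqrt (2 * ln (real (card A))) / real CARD('m))"
proof -
  define K where "K = closure (convex hull A)"
  have [measurable]: "closest_point K \<in> borel_measurable borel"
    using mu by (intro borel_measurable_closest_point) (auto simp: K_def)
  have "0 \<le> D"
    using D[of _ _] A by (metis all_not_in_conv diff_self norm_zero)
  have "0 \<le> ln (real (card A))"
    using A by (intro ln_ge_zero) (simp add: Suc_le_eq card_gt_0_iff)
  have "(\<integral>\<^sup>+y. ennreal ((norm (closest_point K y - mu))\<^sup>2) \<partial>gauss_measure mu \<sigma>)
      \<le> ennreal (\<sigma> * D * sqrt (2 * ln (real (card A))))"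
  proof (rule nn_integral_le_Max_subgaussian[OF prob_space_gauss_measure[OF \<sigma>] A])
    show "(norm (closest_point K y - mu))\<^sup>2 \<le> Max ((\<lambda>a. inner (a - mu) (y - mu)) ` A)" for y
      unfolding K_def by (rule closest_point_sq_dist_le_Max_inner[OF A mu])
    show "(\<integral>\<^sup>+y. ennreal (exp (t * inner (a - mu) (y - mu))) \<partial>gauss_measure mu \<sigma>)
        \<le> ennreal (exp (t\<^sup>2 * (\<sigma> * D)\<^sup>2 / 2))" if "a \<in> A" for a t
    proof -
      have "norm (a - mu) \<le> D"
        using D that by (intro norm_diff_le_of_closure_convex_hull[OF mu]) auto
      then have "(norm (a - mu))\<^sup>2 \<le> D\<^sup>2"
        by (simp add: power_mono)
      then have "t\<^sup>2 * \<sigma>\<^sup>2 * (norm (a - mu))\<^sup>2 \<le> t\<^sup>2 * \<sigma>\<^sup>2 * D\<^sup>2"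
        by (intro mult_left_mono) auto
      then show ?thesis
        by (simp add: nn_integral_gauss_exp_inner[OF \<sigma>] power_mult_distrib ac_simps)
    qed
  qed (use \<sigma> \<open>0 \<le> D\<close> in auto)
  then have "(\<integral>\<^sup>+y. ennreal ((norm (closest_point K y - mu))\<^sup>2) * ennreal (1 / real CARD('m)) \<partial>gauss_measure mu \<sigma>)
      \<le> ennreal (\<sigma> * D * sqrt (2 * ln (real (card A)))) * ennreal (1 / real CARD('m))"
    by (simp add: nn_integral_multc mult_right_mono)
  also have "ennreal (\<sigma> * D * sqrt (2 * ln (real (card A)))) * ennreal (1 / real CARD('m))
      = ennreal (\<sigma> * D * sqrt (2 * ln (real (card A))) / real CARD('m))"
    using \<sigma> \<open>0 \<le> D\<close> \<open>0 \<le> ln (real (card A))\<close> by (subst ennreal_mult[symmetric]) auto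
  finally show ?thesis
    by (simp add: K_def[symmetric] nn_integral_distr ennreal_mult[symmetric])
qed

section \<open>The projected Gaussian mechanism\<close>

lemma avgQ_in_closure_convex_hull:
  assumes "1 \<le> n" and "x \<in> PiE {..<n} (\<lambda>_. X)"
  shows "avgQ Q n x \<in> closure (convex hull (Q ` X))"
proof -
  have "avgQ Q n x = (\<Sum>i<n. (1 / real n) *\<^sub>R Q (x i))"
    by (simp add: avgQ_def scaleR_sum_right)
  also have "\<dots> \<in> convex hull (Q ` X)"
    using assms by (intro convex_sum) (auto intro: hull_inc)
  finally show ?thesis
    using closure_subset by blast
qed

lemma avgQ_diff_neighbours:
  assumes "neighbours n i x x'"
  shows "avgQ Q n x - avgQ Q n x' = (1 / real n) *\<^sub>R (Q (x i) - Q (x' i))"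
proof -
  have "(\<Sum>j<n. Q (x j) - Q (x' j)) = (\<Sum>j<n. if j = i then Q (x i) - Q (x' i) else 0)"
    using assms by (intro sum.cong) (auto simp: neighbours_def)
  also have "\<dots> = Q (x i) - Q (x' i)"
    using assms by (simp add: neighbours_def)
  finally show ?thesis
    by (simp add: avgQ_def sum_subtractf scaleR_diff_right[symmetric])
qed

lemma renyi_star_proj_gauss_mech_le:
  fixes Q :: "'b \<Rightarrow> real^'m::finite"
  assumes "\<sigma> > 0" "1 \<le> n" "X \<noteq> {}" "neighbours n i x x'"
  shows "renyi_star (proj_gauss_mech X Q \<sigma> n x) (proj_gauss_mech X Q \<sigma> n x')
    \<le> ereal ((norm (Q (x i) - Q (x' i)))\<^sup>2 / (2 * (\<sigma> * real n)\<^sup>2))"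
proof -
  have "closest_point (closure (convex hull (Q ` X))) \<in> borel_measurable borel"
    using assms(3) by (intro borel_measurable_closest_point) auto
  then have "renyi_star (proj_gauss_mech X Q \<sigma> n x) (proj_gauss_mech X Q \<sigma> n x')
      \<le> ereal ((norm (avgQ Q n x - avgQ Q n x'))\<^sup>2 / (2 * \<sigma>\<^sup>2))"
    unfolding proj_gauss_mech_def by (rule renyi_star_distr_gauss_le[OF assms(1)])
  also have "(norm (avgQ Q n x - avgQ Q n x'))\<^sup>2 / (2 * \<sigma>\<^sup>2)
      = (norm (Q (x i) - Q (x' i)))\<^sup>2 / (2 * (\<sigma> * real n)\<^sup>2)"
    using assms(2) by (simp add: avgQ_diff_neighbours[OF assms(4)] power_divide power_mult_distrib)
  finally show ?thesis .
qed

text \<open>Since \<open>\<infinity> * 0 = 0\<close> in \<open>ereal\<close>, the last hypothesis forces \<open>z = 0\<close> when \<open>s = \<infinity>\<close> and \<open>h = 0\<close>.\<close>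

lemma ereal_half_sq_div_le:
  fixes z k h :: real and s :: ereal
  assumes "0 \<le> z" "0 < k" "0 \<le> h" "ereal z \<le> s * ereal h"
  shows "ereal (z\<^sup>2 / (2 * k\<^sup>2)) \<le> ereal (1/2) * (s / ereal k)\<^sup>2 * ereal (h\<^sup>2)"
proof (cases s)
  case (real r)
  then have "z\<^sup>2 \<le> (r * h)\<^sup>2"
    using assms by (intro power_mono) auto
  then have "z\<^sup>2 / (2 * k\<^sup>2) \<le> 1/2 * (r / k)\<^sup>2 * h\<^sup>2"
    using assms(2) by (simp add: field_simps)
  then show ?thesis
    using real assms(2) by (simp add: power2_eq_square)
next
  case PInf
  then show ?thesis
    using assms by (cases "h = 0") (simp_all add: power2_eq_square)
qed (use assms in auto)

lemma norm_le_sens: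
  "u \<in> X \<Longrightarrow> v \<in> X \<Longrightarrow> ereal (norm (Q u - Q v)) \<le> sens X Q"
  unfolding sens_def by (rule Sup_upper) auto

lemma zCDP_proj_gauss_mech:
  fixes Q :: "'b \<Rightarrow> real^'m::finite"
  assumes "\<sigma> > 0" "1 \<le> n" "X \<noteq> {}"
  shows "zCDP X n (proj_gauss_mech X Q \<sigma> n) (sens X Q / ereal (\<sigma> * real n))"
  unfolding zCDP_def
proof (intro ballI allI impI)
  fix x x' i
  assume x: "x \<in> PiE {..<n} (\<lambda>_. X)" and x': "x' \<in> PiE {..<n} (\<lambda>_. X)" and nb: "neighbours n i x x'"
  then have "x i \<in> X" "x' i \<in> X"
    by (auto simp: neighbours_def)
  then have "ereal ((norm (Q (x i) - Q (x' i)))\<^sup>2 / (2 * (\<sigma> * real n)\<^sup>2))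
      \<le> ereal (1/2) * (sens X Q / ereal (\<sigma> * real n))\<^sup>2 * ereal (1\<^sup>2)"
    using assms by (intro ereal_half_sq_div_le) (auto simp: norm_le_sens)
  then show "renyi_star (proj_gauss_mech X Q \<sigma> n x) (proj_gauss_mech X Q \<sigma> n x')
      \<le> ereal (1/2) * (sens X Q / ereal (\<sigma> * real n))\<^sup>2"
    using renyi_star_proj_gauss_mech_le[where Q = Q, OF assms nb] by (simp add: one_ereal_def[symmetric])
qed

lemma hamming_eq_0_imp_eq:
  assumes "u \<in> PiE {..<d} Xs" "v \<in> PiE {..<d} Xs" "hamming d u v = 0"
  shows "u = v"
proof (rule PiE_ext[OF assms(1,2)])
  have "{j \<in> {..<d}. u j \<noteq> v j} = {}"
    using assms(3) by (simp add: hamming_def)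
  then show "u j = v j" if "j \<in> {..<d}" for j
    using that by blast
qed

lemma norm_le_mult_hamming:
  fixes Q :: "(nat \<Rightarrow> 'a) \<Rightarrow> 'b::real_normed_vector"
  assumes step: "\<And>u v. u \<in> PiE {..<d} Xs \<Longrightarrow> v \<in> PiE {..<d} Xs \<Longrightarrow> hamming d u v \<le> 1 \<Longrightarrow> norm (Q u - Q v) \<le> r"
  shows "u \<in> PiE {..<d} Xs \<Longrightarrow> v \<in> PiE {..<d} Xs \<Longrightarrow> norm (Q u - Q v) \<le> r * hamming d u v"
proof (induction "hamming d u v" arbitrary: u)
  case 0
  then show ?case
    using hamming_eq_0_imp_eq[of u d Xs v] by simp
next
  case (Suc k u)
  then obtain j where j: "j < d" "u j \<noteq> v j"
    unfolding hamming_def by (metis (mono_tags, lifting) Collect_empty_eq card.empty lessThan_iff nat.distinct(1))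
  define w where "w = u(j := v j)"
  have w: "w \<in> PiE {..<d} Xs"
    using Suc.prems j by (auto simp: w_def PiE_def extensional_def)
  have "{i \<in> {..<d}. w i \<noteq> v i} = {i \<in> {..<d}. u i \<noteq> v i} - {j}"
    by (auto simp: w_def)
  then have hamming_w_v: "hamming d w v = k"
    using Suc.hyps(2) j by (simp add: hamming_def)
  have "{i \<in> {..<d}. u i \<noteq> w i} = {j}"
    using j by (auto simp: w_def)
  then have "hamming d u w = 1"
    by (simp add: hamming_def)
  then have "norm (Q u - Q w) \<le> r"
    using step[OF Suc.prems(1) w] by simp
  moreover have "norm (Q w - Q v) \<le> r * k"
    using Suc.hyps(1)[OF hamming_w_v[symmetric] w Suc.prems(2)] hamming_w_v by simp
  ultimately have "norm (Q u - Q v) \<le> r + r * k"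
    using norm_triangle_le_diff[of "Q u - Q w" "Q v - Q w"] norm_diff_triangle_le by fastforce
  then show ?case
    unfolding Suc.hyps(2)[symmetric] by (simp add: algebra_simps)
qed

lemma norm_le_sens0_mult_hamming:
  assumes "u \<in> PiE {..<d} Xs" "v \<in> PiE {..<d} Xs"
  shows "ereal (norm (Q u - Q v)) \<le> sens0 d (PiE {..<d} Xs) Q * ereal (real (hamming d u v))"
proof -
  have sens0_ge: "ereal (norm (Q u' - Q v')) \<le> sens0 d (PiE {..<d} Xs) Q"
    if "u' \<in> PiE {..<d} Xs" "v' \<in> PiE {..<d} Xs" "hamming d u' v' \<le> 1" for u' v'
    unfolding sens0_def by (rule Sup_upper) (use that in auto)
  show ?thesis
  proof (cases "sens0 d (PiE {..<d} Xs) Q")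
    case (real r)
    then have "norm (Q u' - Q v') \<le> r"
      if "u' \<in> PiE {..<d} Xs" "v' \<in> PiE {..<d} Xs" "hamming d u' v' \<le> 1" for u' v'
      using sens0_ge[OF that] by simp
    then have "norm (Q u - Q v) \<le> r * hamming d u v"
      by (rule norm_le_mult_hamming[OF _ assms])
    then show ?thesis
      using real by simp
  next
    case PInf
    then show ?thesis
      using hamming_eq_0_imp_eq[OF assms] by (cases "hamming d u v = 0") auto
  next
    case MInf
    then show ?thesis
      using sens0_ge[OF assms(1) assms(1)] by (simp add: hamming_def)
  qed
qed

lemma nabla0CDP_proj_gauss_mech:
  fixes Q :: "(nat \<Rightarrow> 'a) \<Rightarrow> real^'m::finite"
  assumes "\<sigma> > 0" "1 \<le> n" "\<And>j. j < d \<Longrightarrow> Xs j \<noteq> {}"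
  defines "X \<equiv> PiE {..<d} Xs"
  shows "nabla0CDP d X n (proj_gauss_mech X Q \<sigma> n) (sens0 d X Q / ereal (\<sigma> * real n))"
  unfolding nabla0CDP_def
proof (intro ballI allI impI)
  fix x x' i
  assume x: "x \<in> PiE {..<n} (\<lambda>_. X)" and x': "x' \<in> PiE {..<n} (\<lambda>_. X)" and nb: "neighbours n i x x'"
  then have "x i \<in> X" "x' i \<in> X"
    by (auto simp: neighbours_def)
  moreover have "X \<noteq> {}"
    using assms(3) by (simp add: X_def PiE_eq_empty_iff)
  ultimately have "ereal ((norm (Q (x i) - Q (x' i)))\<^sup>2 / (2 * (\<sigma> * real n)\<^sup>2))
      \<le> ereal (1/2) * (sens0 d X Q / ereal (\<sigma> * real n))\<^sup>2 * ereal ((real (hamming d (x i) (x' i)))\<^sup>2)"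
    using assms(1,2) unfolding X_def by (intro ereal_half_sq_div_le norm_le_sens0_mult_hamming) auto
  then show "renyi_star (proj_gauss_mech X Q \<sigma> n x) (proj_gauss_mech X Q \<sigma> n x')
      \<le> ereal (1/2) * (sens0 d X Q / ereal (\<sigma> * real n))\<^sup>2 * ereal ((real (hamming d (x i) (x' i)))\<^sup>2)"
    using renyi_star_proj_gauss_mech_le[where Q = Q, OF assms(1,2) \<open>X \<noteq> {}\<close> nb] by simp
qed

lemma proj_gauss_mech_sq_error_le:
  fixes Q :: "'b \<Rightarrow> real^'m::finite"
  assumes "\<sigma> > 0" "1 \<le> n" "x \<in> PiE {..<n} (\<lambda>_. X)"
  shows "(\<integral>\<^sup>+y. ennreal ((norm (y - avgQ Q n x))\<^sup>2 / real CARD('m)) \<partial>proj_gauss_mech X Q \<sigma> n x) \<le> ennreal (\<sigma>\<^sup>2)"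
  unfolding proj_gauss_mech_def
  using assms by (intro nn_integral_distr_closest_point_sq_le avgQ_in_closure_convex_hull) auto

lemma norm_le_real_of_ereal_sens:
  assumes "finite X" "u \<in> X" "v \<in> X"
  shows "norm (Q u - Q v) \<le> real_of_ereal (sens X Q)"
proof -
  define S where "S = (\<lambda>(u, v). ereal (norm (Q u - Q v))) ` (X \<times> X)"
  have "sens X Q = Sup S"
    unfolding sens_def S_def by (rule arg_cong[where f = Sup]) auto
  moreover have "finite S" "S \<noteq> {}"
    using assms by (auto simp: S_def)
  then have "Sup S \<in> S"
    using Max_in Max_Sup by metis
  ultimately obtain u0 v0 where "sens X Q = ereal (norm (Q u0 - Q v0))"
    by (auto simp: S_def)
  then show ?thesis
    using norm_le_sens[OF assms(2,3), of Q] by simp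
qed

lemma proj_gauss_mech_sq_error_le_sens:
  fixes Q :: "'b \<Rightarrow> real^'m::finite"
  assumes \<sigma>: "\<sigma> > 0" and n: "1 \<le> n" and X: "finite X" and x: "x \<in> PiE {..<n} (\<lambda>_. X)"
  shows "(\<integral>\<^sup>+y. ennreal ((norm (y - avgQ Q n x))\<^sup>2 / real CARD('m)) \<partial>proj_gauss_mech X Q \<sigma> n x)
    \<le> ennreal (\<sigma> * real_of_ereal (sens X Q) * sqrt (2 * ln (real (card X))) / real CARD('m))"
proof -
  define D where "D = real_of_ereal (sens X Q)"
  have "x 0 \<in> X"
    using PiE_mem[OF x, of 0] n by simp
  then have "0 \<le> D"
    using norm_le_real_of_ereal_sens[OF X, of "x 0" "x 0" Q] by (simp add: D_def)
  have "0 < card (Q ` X)"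
    using X \<open>x 0 \<in> X\<close> by (auto simp: card_gt_0_iff)
  moreover have "card (Q ` X) \<le> card X"
    using X by (rule card_image_le)
  ultimately have "sqrt (2 * ln (real (card (Q ` X)))) \<le> sqrt (2 * ln (real (card X)))"
    by simp
  then have "\<sigma> * D * sqrt (2 * ln (real (card (Q ` X)))) / real CARD('m)
      \<le> \<sigma> * D * sqrt (2 * ln (real (card X))) / real CARD('m)"
    using \<sigma> \<open>0 \<le> D\<close> by (intro divide_right_mono mult_left_mono) auto
  moreover have "norm (a - b) \<le> D" if "a \<in> Q ` X" "b \<in> Q ` X" for a b
    using that norm_le_real_of_ereal_sens[OF X] by (auto simp: D_def)
  then have "(\<integral>\<^sup>+y. ennreal ((norm (y - avgQ Q n x))\<^sup>2 / real CARD('m)) \<partial>proj_gauss_mech X Q \<sigma> n x)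
      \<le> ennreal (\<sigma> * D * sqrt (2 * ln (real (card (Q ` X)))) / real CARD('m))"
    unfolding proj_gauss_mech_def
    using X \<open>x 0 \<in> X\<close> avgQ_in_closure_convex_hull[OF n x]
    by (intro nn_integral_distr_closest_point_sq_le_sqrt_ln[OF \<sigma>]) auto
  ultimately show ?thesis
    unfolding D_def[symmetric] by (meson ennreal_leI order_trans)
qed

theorem theorem4p1:
  fixes d n :: nat and Xs :: "nat \<Rightarrow> 'a set" and \<sigma> :: real
    and Q :: "(nat \<Rightarrow> 'a) \<Rightarrow> real^'m"
  assumes "\<sigma> > 0" and "n \<ge> 1" and "\<And>j. j < d \<Longrightarrow> Xs j \<noteq> {}"
  defines "X \<equiv> PiE {..<d} Xs"
  defines "M \<equiv> proj_gauss_mech X Q \<sigma> n"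
  shows "zCDP X n M (sens X Q / ereal (\<sigma> * real n))
       \<and> nabla0CDP d X n M (sens0 d X Q / ereal (\<sigma> * real n))
       \<and> (\<forall>x \<in> PiE {..<n} (\<lambda>_. X).
            (\<integral>\<^sup>+ y. ennreal (norm (y - avgQ Q n x) ^ 2 / real CARD('m)) \<partial>(M x)) \<le> ennreal (\<sigma>^2)
          \<and> (finite X \<longrightarrow>
            (\<integral>\<^sup>+ y. ennreal (norm (y - avgQ Q n x) ^ 2 / real CARD('m)) \<partial>(M x))
              \<le> ennreal (\<sigma> * real_of_ereal (sens X Q) * sqrt (2 * ln (real (card X))) / real CARD('m))))"
proof -
  have "X \<noteq> {}"
    using assms(3) by (simp add: X_def PiE_eq_empty_iff)
  have "zCDP X n M (sens X Q / ereal (\<sigma> * real n))"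
    unfolding M_def by (rule zCDP_proj_gauss_mech[OF assms(1,2) \<open>X \<noteq> {}\<close>])
  moreover have "nabla0CDP d X n M (sens0 d X Q / ereal (\<sigma> * real n))"
    unfolding M_def X_def by (rule nabla0CDP_proj_gauss_mech[OF assms(1-3)])
  moreover have "\<forall>x \<in> PiE {..<n} (\<lambda>_. X).
      (\<integral>\<^sup>+ y. ennreal (norm (y - avgQ Q n x) ^ 2 / real CARD('m)) \<partial>(M x)) \<le> ennreal (\<sigma>^2)
      \<and> (finite X \<longrightarrow> (\<integral>\<^sup>+ y. ennreal (norm (y - avgQ Q n x) ^ 2 / real CARD('m)) \<partial>(M x))
        \<le> ennreal (\<sigma> * real_of_ereal (sens X Q) * sqrt (2 * ln (real (card X))) / real CARD('m)))"
    unfolding M_def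
    using proj_gauss_mech_sq_error_le[OF assms(1,2)] proj_gauss_mech_sq_error_le_sens[OF assms(1,2)]
    by blast
  ultimately show ?thesis
    by blast
qed

end
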